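(* Let $|\psi\rangle,|\phi\rangle,|e\rangle,|f\rangle$ be unit vectors in $\mathbb{C}^2$ and let $\mathcal{C}$ be the set of all quantum channels on $\mathcal{L}(\mathbb{C}^2)$. Then $$\max_{\Psi\in\mathcal{C}}\left\{\frac12\langle e|\Psi(|\psi\rangle\langle\psi|)|e\rangle+\frac12\langle f|\Psi(|\phi\rangle\langle\phi|)|f\rangle\right\}\le\frac12\left(1+\sqrt{|\langle e|f\rangle|^2+\left(|\langle\psi|\phi\rangle||\langle e|f\rangle|+\sqrt{(1-|\langle\psi|\phi\rangle|^2)(1-|\langle e|f\rangle|^2)}\right)^2}\right).$$
   Context: A quantum channel is a linear, completely positive, trace preserving map on $\mathcal{L}(\mathbb{C}^2)$. *)

theory Defs
  imports "Jordan_Normal_Form.Matrix"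
begin

definition qform :: "complex mat \<Rightarrow> complex vec \<Rightarrow> complex" where
  "qform A v = (\<Sum>i<dim_vec v. \<Sum>j<dim_vec v. cnj (v $ i) * A $$ (i, j) * v $ j)"

definition psd :: "nat \<Rightarrow> complex mat \<Rightarrow> bool" where
  "psd m A \<longleftrightarrow> A \<in> carrier_mat m m \<and>
     (\<forall>v \<in> carrier_vec m. Im (qform A v) = 0 \<and> Re (qform A v) \<ge> 0)"

definition trace2 :: "complex mat \<Rightarrow> complex" where
  "trace2 A = A $$ (0,0) + A $$ (1,1)"

definition linear_map2 :: "(complex mat \<Rightarrow> complex mat) \<Rightarrow> bool" where
  "linear_map2 \<Psi> \<longleftrightarrow>
     (\<forall>A \<in> carrier_mat 2 2. \<Psi> A \<in> carrier_mat 2 2) \<and>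
     (\<forall>A \<in> carrier_mat 2 2. \<forall>B \<in> carrier_mat 2 2. \<Psi> (A + B) = \<Psi> A + \<Psi> B) \<and>
     (\<forall>A \<in> carrier_mat 2 2. \<forall>c::complex. \<Psi> (c \<cdot>\<^sub>m A) = c \<cdot>\<^sub>m \<Psi> A)"

text \<open>The map id_n \<otimes> \<Psi> on L(C^n \<otimes> C^2), with index (a,b) \<mapsto> 2a+b.\<close>
definition ampl :: "nat \<Rightarrow> (complex mat \<Rightarrow> complex mat) \<Rightarrow> complex mat \<Rightarrow> complex mat" where
  "ampl n \<Psi> X = mat (2*n) (2*n) (\<lambda>(i,j).
      \<Psi> (mat 2 2 (\<lambda>(b,b'). X $$ (2*(i div 2) + b, 2*(j div 2) + b'))) $$ (i mod 2, j mod 2))"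

definition completely_positive2 :: "(complex mat \<Rightarrow> complex mat) \<Rightarrow> bool" where
  "completely_positive2 \<Psi> \<longleftrightarrow>
     (\<forall>n::nat. \<forall>X. psd (2*n) X \<longrightarrow> psd (2*n) (ampl n \<Psi> X))"

definition trace_preserving2 :: "(complex mat \<Rightarrow> complex mat) \<Rightarrow> bool" where
  "trace_preserving2 \<Psi> \<longleftrightarrow> (\<forall>A \<in> carrier_mat 2 2. trace2 (\<Psi> A) = trace2 A)"

definition quantum_channel2 :: "(complex mat \<Rightarrow> complex mat) \<Rightarrow> bool" where
  "quantum_channel2 \<Psi> \<longleftrightarrow> linear_map2 \<Psi> \<and> completely_positive2 \<Psi> \<and> trace_preserving2 \<Psi>"

definition channels2 :: "(complex mat \<Rightarrow> complex mat) set" where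
  "channels2 = {\<Psi>. quantum_channel2 \<Psi>}"

definition braket :: "complex vec \<Rightarrow> complex vec \<Rightarrow> complex" where
  "braket u v = (\<Sum>i<dim_vec v. cnj (u $ i) * v $ i)"

definition unit_vec2 :: "complex vec \<Rightarrow> bool" where
  "unit_vec2 v \<longleftrightarrow> v \<in> carrier_vec 2 \<and> braket v v = 1"

definition ketbra :: "complex vec \<Rightarrow> complex mat" where
  "ketbra v = mat (dim_vec v) (dim_vec v) (\<lambda>(i,j). v $ i * cnj (v $ j))"

definition expval :: "complex vec \<Rightarrow> complex mat \<Rightarrow> complex" where
  "expval e M = qform M e"

end

theory Submission
  imports Defs "HOL-Analysis.Euclidean_Space"
begin

text \<open>
  Apply id \<otimes> \<Psi> to |w><w| for w = \<psi> \<oplus> \<phi>. The result H is a positive 4 \<times> 4 matrix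
  whose diagonal blocks are the output states \<rho>1 = \<Psi>(|\<psi>><\<psi>|), \<rho>2 = \<Psi>(|\<phi>><\<phi>|), and
  whose off-diagonal block has trace <\<phi>|\<psi>> by trace preservation. Expanding this trace in an
  orthonormal basis g, g' and applying the Cauchy-Schwarz inequality of H bounds |<\<psi>|\<phi>>| by
  the classical fidelity of the outcome distributions of \<rho>1 and \<rho>2 in that basis. Hence
  <g|\<rho>1|g> - <g|\<rho>2|g> \<le> sqrt (1 - |<\<psi>|\<phi>>|^2) for every unit vector g, i.e. the Bloch
  vectors of the outputs satisfy |r1 - r2| \<le> 2 sqrt (1 - |<\<psi>|\<phi>>|^2).

  With a, b the Bloch vectors of e, f, the objective equals 1/2 + (a \<bullet> r1 + b \<bullet> r2) / 4, and
  a \<bullet> r1 + b \<bullet> r2 = ((a + b) \<bullet> (r1 + r2) + (a - b) \<bullet> (r1 - r2)) / 2, where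
  |a + b| = 2 |<e|f>| and |a - b| = 2 sqrt (1 - |<e|f>|^2). By Cauchy-Schwarz what remains is to
  maximise a linear function of X = |r1 + r2| / 2 and Y = |r1 - r2| / 2 over the quarter disc
  X^2 + Y^2 \<le> 1 cut off at Y \<le> sqrt (1 - |<\<psi>|\<phi>>|^2).
\<close>

lemma inner_add_inner_le:
  fixes a b r s :: "'a::real_inner"
  shows "inner a r + inner b s \<le> (norm (a + b) * norm (r + s) + norm (a - b) * norm (r - s)) / 2"
proof -
  have "inner a r + inner b s = (inner (a + b) (r + s) + inner (a - b) (r - s)) / 2"
    by (simp add: inner_add inner_diff inner_commute)
  also have "\<dots> \<le> (norm (a + b) * norm (r + s) + norm (a - b) * norm (r - s)) / 2"
    using norm_cauchy_schwarz[of "a + b" "r + s"] norm_cauchy_schwarz[of "a - b" "r - s"] by simp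
  finally show ?thesis .
qed

lemma norm_add_diff_unit:
  fixes a b :: "'a::real_inner"
  assumes "norm a = 1" "norm b = 1"
  shows "(norm (a + b))\<^sup>2 = 2 + 2 * inner a b" and "(norm (a - b))\<^sup>2 = 2 - 2 * inner a b"
  using assms by (simp_all add: power2_norm_eq_inner inner_add inner_diff inner_commute norm_eq_1)

lemma parallelogram_law:
  fixes r s :: "'a::real_inner"
  shows "(norm (r + s))\<^sup>2 + (norm (r - s))\<^sup>2 = 2 * (norm r)\<^sup>2 + 2 * (norm s)\<^sup>2"
  by (simp add: power2_norm_eq_inner inner_add inner_diff inner_commute)

lemma binary_fidelity_bound:
  fixes A B k :: real
  assumes "0 \<le> A" "A \<le> 1" "0 \<le> B" "B \<le> 1" "0 \<le> k"
    and k: "k \<le> sqrt (A * B) + sqrt ((1 - A) * (1 - B))"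
  shows "(A - B)\<^sup>2 \<le> 1 - k\<^sup>2"
proof -
  define p where "p = sqrt A"
  define p' where "p' = sqrt (1 - A)"
  define q where "q = sqrt B"
  define q' where "q' = sqrt (1 - B)"
  have sq: "p\<^sup>2 = A" "p'\<^sup>2 = 1 - A" "q\<^sup>2 = B" "q'\<^sup>2 = 1 - B"
    using assms by (simp_all add: p_def p'_def q_def q'_def)
  have F: "k \<le> p * q + p' * q'"
    using k by (simp add: p_def p'_def q_def q'_def real_sqrt_mult)
  have unit: "p\<^sup>2 + p'\<^sup>2 = 1" "q\<^sup>2 + q'\<^sup>2 = 1"
    using sq by simp_all
  \<comment> \<open>Brahmagupta's identity, once for each pairing of the square roots\<close>
  have "(p * q + p' * q')\<^sup>2 + (p * q' - p' * q)\<^sup>2 = (p\<^sup>2 + p'\<^sup>2) * (q\<^sup>2 + q'\<^sup>2)"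
    and "(p * q' + p' * q)\<^sup>2 + (p * q - p' * q')\<^sup>2 = (p\<^sup>2 + p'\<^sup>2) * (q\<^sup>2 + q'\<^sup>2)"
    by (simp_all add: power2_eq_square algebra_simps)
  hence one: "(p * q + p' * q')\<^sup>2 + (p * q' - p' * q)\<^sup>2 = 1"
    and le1: "(p * q' + p' * q)\<^sup>2 \<le> 1"
    unfolding unit using zero_le_power2[of "p * q - p' * q'"] by linarith+
  have "A - B = p\<^sup>2 * q'\<^sup>2 - p'\<^sup>2 * q\<^sup>2"
    unfolding sq by (simp add: algebra_simps)
  also have "\<dots> = (p * q' - p' * q) * (p * q' + p' * q)"
    by (simp add: power2_eq_square algebra_simps)
  finally have "(A - B)\<^sup>2 = (p * q' - p' * q)\<^sup>2 * (p * q' + p' * q)\<^sup>2"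
    by (simp only: power_mult_distrib)
  also have "\<dots> \<le> (p * q' - p' * q)\<^sup>2"
    by (rule mult_left_le[OF le1]) simp
  also have "\<dots> \<le> 1 - k\<^sup>2"
    using one power_mono[OF F \<open>0 \<le> k\<close>, of 2] by linarith
  finally show ?thesis .
qed

lemma linear_le_on_cut_disc:
  fixes a b X Y :: real
  assumes "0 \<le> a" "a \<le> 1" "0 \<le> b" "b \<le> 1" "0 \<le> X" "0 \<le> Y"
    and disc: "X\<^sup>2 + Y\<^sup>2 \<le> 1" and cut: "Y \<le> sqrt (1 - a\<^sup>2)"
  shows "b * X + sqrt (1 - b\<^sup>2) * Y \<le> sqrt (b\<^sup>2 + (a * b + sqrt ((1 - a\<^sup>2) * (1 - b\<^sup>2)))\<^sup>2)"
proof -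
  define s where "s = sqrt (1 - b\<^sup>2)"
  define c where "c = sqrt (1 - a\<^sup>2)"
  define M where "M = a * b + c * s"
  have s2: "s\<^sup>2 = 1 - b\<^sup>2" and c2: "c\<^sup>2 = 1 - a\<^sup>2" and "0 \<le> s" "0 \<le> c" "s \<le> 1" "c \<le> 1"
    using assms by (simp_all add: s_def c_def power_le_one)
  have unit_linear: "p * X + q * Y \<le> 1" if "p\<^sup>2 + q\<^sup>2 = 1" for p q
  proof -
    have "p * X + q * Y \<le> sqrt (X\<^sup>2 + Y\<^sup>2)"
      using norm_cauchy_schwarz[of "(p, q)" "(X, Y)"] that by (simp add: norm_Pair)
    also have "\<dots> \<le> 1"
      using disc by simp
    finally show ?thesis .
  qed
  have "b * X + s * Y \<le> sqrt (b\<^sup>2 + M\<^sup>2)"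
  proof (cases "a \<le> b")
    case True
    have "s * (1 - c) \<le> (1 + c) * (1 - c)"
      using \<open>s \<le> 1\<close> \<open>0 \<le> c\<close> \<open>c \<le> 1\<close> by (intro mult_right_mono) auto
    also have "\<dots> = a\<^sup>2"
      using c2 by (simp add: algebra_simps power2_eq_square)
    also have "\<dots> \<le> a * b"
      using True assms by (simp add: power2_eq_square mult_left_mono)
    finally have "s \<le> M"
      by (simp add: M_def algebra_simps)
    hence "1 \<le> b\<^sup>2 + M\<^sup>2"
      using \<open>0 \<le> s\<close> power_mono[of s M 2] s2 by linarith
    moreover have "b * X + s * Y \<le> 1"
      using unit_linear[of b s] s2 by simp
    moreover have "1 \<le> sqrt (b\<^sup>2 + M\<^sup>2)"
      using \<open>1 \<le> b\<^sup>2 + M\<^sup>2\<close> by simp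
    ultimately show ?thesis
      by linarith
  next
    case False
    hence "0 < a"
      using assms by linarith
    have "b\<^sup>2 \<le> a\<^sup>2"
      using False assms by (intro power_mono) auto
    moreover have "(b * c)\<^sup>2 = b\<^sup>2 - a\<^sup>2 * b\<^sup>2" "(a * s)\<^sup>2 = a\<^sup>2 - a\<^sup>2 * b\<^sup>2"
      unfolding power_mult_distrib c2 s2 by (simp_all add: algebra_simps)
    ultimately have "(b * c)\<^sup>2 \<le> (a * s)\<^sup>2"
      by linarith
    hence "b * c \<le> a * s"
      by (rule power2_le_imp_le) (use \<open>0 \<le> s\<close> \<open>0 < a\<close> in simp)
    hence "0 \<le> s - b * c / a"
      using \<open>0 < a\<close> by (simp add: pos_divide_le_eq mult.commute)
    hence "(s - b * c / a) * Y \<le> (s - b * c / a) * c"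
      using cut by (intro mult_left_mono) (simp_all only: c_def)
    moreover have "a * X + c * Y \<le> 1"
      using unit_linear[of a c] c2 by simp
    hence "b / a * (a * X + c * Y) \<le> b / a"
      using \<open>0 < a\<close> assms by (intro mult_left_le) auto
    moreover have "b * X + s * Y = b / a * (a * X + c * Y) + (s - b * c / a) * Y"
      using \<open>0 < a\<close> by (simp add: field_simps)
    moreover have "b / a + (s - b * c / a) * c = b * (1 - c\<^sup>2) / a + c * s"
      using \<open>0 < a\<close> by (simp add: field_simps power2_eq_square)
    moreover have "b * (1 - c\<^sup>2) / a = a * b"
      using \<open>0 < a\<close> c2 by (simp add: power2_eq_square)
    ultimately have "b * X + s * Y \<le> M"
      unfolding M_def by linarith
    also have "M \<le> sqrt (b\<^sup>2 + M\<^sup>2)"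
      by (simp add: real_le_rsqrt)
    finally show ?thesis .
  qed
  thus ?thesis
    by (simp add: s_def c_def M_def real_sqrt_mult mult.commute)
qed

section \<open>Sesquilinear forms of positive semidefinite matrices\<close>

definition sform :: "complex mat \<Rightarrow> complex vec \<Rightarrow> complex vec \<Rightarrow> complex" where
  "sform A u v = (\<Sum>i<dim_vec u. \<Sum>j<dim_vec v. cnj (u $ i) * A $$ (i, j) * v $ j)"

lemma qform_eq_sform: "qform A v = sform A v v"
  by (simp add: qform_def sform_def)

lemma sform_lincomb_left:
  assumes "u \<in> carrier_vec n" "w \<in> carrier_vec n"
  shows "sform A (x \<cdot>\<^sub>v u + y \<cdot>\<^sub>v w) v = cnj x * sform A u v + cnj y * sform A w v"
proof -
  have "sform A (x \<cdot>\<^sub>v u + y \<cdot>\<^sub>v w) v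
      = (\<Sum>i<n. \<Sum>j<dim_vec v. cnj (x * u $ i + y * w $ i) * A $$ (i, j) * v $ j)"
    using assms unfolding sform_def by (intro sum.cong) auto
  also have "\<dots> = cnj x * sform A u v + cnj y * sform A w v"
    using assms by (simp add: sform_def sum.distrib sum_distrib_left algebra_simps)
  finally show ?thesis .
qed

lemma sform_lincomb_right:
  assumes "u \<in> carrier_vec n" "w \<in> carrier_vec n"
  shows "sform A v (x \<cdot>\<^sub>v u + y \<cdot>\<^sub>v w) = x * sform A v u + y * sform A v w"
proof -
  have "sform A v (x \<cdot>\<^sub>v u + y \<cdot>\<^sub>v w)
      = (\<Sum>i<dim_vec v. \<Sum>j<n. cnj (v $ i) * A $$ (i, j) * (x * u $ j + y * w $ j))"
    using assms unfolding sform_def by (intro sum.cong) auto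
  also have "\<dots> = x * sform A v u + y * sform A v w"
    using assms by (simp add: sform_def sum.distrib sum_distrib_left algebra_simps)
  finally show ?thesis .
qed

lemma qform_lincomb:
  assumes "u \<in> carrier_vec n" "w \<in> carrier_vec n"
  shows "qform A (x \<cdot>\<^sub>v u + y \<cdot>\<^sub>v w) = cnj x * x * qform A u + cnj x * y * sform A u w
           + cnj y * x * sform A w u + cnj y * y * qform A w"
  using assms by (simp add: qform_eq_sform sform_lincomb_left[OF assms] sform_lincomb_right algebra_simps)

lemma le_mult_if_quadratic_nonneg:
  fixes a c d :: real
  assumes nonneg: "\<And>t. 0 \<le> a - 2 * t * c + t\<^sup>2 * c * d" and "0 \<le> d"
  shows "c \<le> a * d"
proof (cases "d = 0")
  case True
  have "c = 0"
  proof (rule ccontr)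
    assume "c \<noteq> 0"
    thus False
      using nonneg[of "(a + 1) / (2 * c)"] True by (simp add: field_simps)
  qed
  thus ?thesis
    using True by simp
next
  case False
  hence "0 < d"
    using \<open>0 \<le> d\<close> by simp
  have "2 * (1 / d) * c - (1 / d)\<^sup>2 * c * d = c / d"
    using \<open>0 < d\<close> by (simp add: field_simps power2_eq_square)
  hence "c / d \<le> a"
    using nonneg[of "1 / d"] by linarith
  thus ?thesis
    using \<open>0 < d\<close> by (simp add: pos_divide_le_eq mult.commute)
qed

lemma psd_qform_real:
  assumes "psd n A" "v \<in> carrier_vec n"
  shows "qform A v = of_real (Re (qform A v))" and "0 \<le> Re (qform A v)"
  using assms by (simp_all add: psd_def complex_eq_iff)

lemma psd_sform_swap:
  assumes "psd n A" "u \<in> carrier_vec n" "w \<in> carrier_vec n"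
  shows "sform A w u = cnj (sform A u w)"
proof -
  have Im0: "Im (qform A v) = 0" if "v \<in> carrier_vec n" for v
    using assms(1) that by (simp add: psd_def)
  have "Im (qform A (1 \<cdot>\<^sub>v u + 1 \<cdot>\<^sub>v w)) = 0" "Im (qform A (1 \<cdot>\<^sub>v u + \<i> \<cdot>\<^sub>v w)) = 0"
    using assms by (simp_all add: Im0)
  hence "Im (sform A u w + sform A w u) = 0" "Re (sform A u w - sform A w u) = 0"
    unfolding qform_lincomb[OF assms(2,3)] using Im0 assms(2,3) by simp_all
  thus ?thesis
    by (simp add: complex_eq_iff)
qed

lemma psd_Cauchy_Schwarz:
  assumes "psd n A" "u \<in> carrier_vec n" "w \<in> carrier_vec n"
  shows "(cmod (sform A u w))\<^sup>2 \<le> Re (qform A u) * Re (qform A w)"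
proof (rule le_mult_if_quadratic_nonneg)
  define B where "B = sform A u w"
  have BB: "B * cnj B = of_real ((cmod B)\<^sup>2)"
    by (rule complex_norm_square[symmetric])
  fix t :: real
  have "qform A (1 \<cdot>\<^sub>v u + (- of_real t * cnj B) \<cdot>\<^sub>v w)
      = qform A u - 2 * of_real t * (B * cnj B) + (of_real t)\<^sup>2 * (B * cnj B) * qform A w"
    unfolding qform_lincomb[OF assms(2,3)] psd_sform_swap[OF assms] B_def[symmetric]
    by (simp add: power2_eq_square algebra_simps)
  also have "\<dots> = of_real (Re (qform A u) - 2 * t * (cmod B)\<^sup>2 + t\<^sup>2 * (cmod B)\<^sup>2 * Re (qform A w))"
    by (subst (1 2) psd_qform_real(1)[OF assms(1)]) (simp_all add: assms BB)
  finally show "0 \<le> Re (qform A u) - 2 * t * (cmod (sform A u w))\<^sup>2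
      + t\<^sup>2 * (cmod (sform A u w))\<^sup>2 * Re (qform A w)"
    using psd_qform_real(2)[OF assms(1), of "1 \<cdot>\<^sub>v u + (- of_real t * cnj B) \<cdot>\<^sub>v w"] assms
    by (simp add: B_def)
qed (use psd_qform_real(2) assms in blast)

lemma sform_unit_vec:
  assumes "i < n" "j < n"
  shows "sform A (unit_vec n i) (unit_vec n j) = A $$ (i, j)"
proof -
  have "sform A (unit_vec n i) (unit_vec n j)
      = (\<Sum>k<n. \<Sum>l<n. cnj (unit_vec n i $ k) * A $$ (k, l) * unit_vec n j $ l)"
    by (simp add: sform_def)
  also have "\<dots> = A $$ (i, j)"
    using assms unfolding unit_vec_def
    by (simp add: if_distrib[of cnj] if_distrib[of "\<lambda>x. x * _"] if_distrib[of "\<lambda>x. _ * x"] cong: if_cong)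
  finally show ?thesis .
qed

lemma psd_hermitian:
  assumes "psd n A" "i < n" "j < n"
  shows "A $$ (j, i) = cnj (A $$ (i, j))"
  using psd_sform_swap[OF assms(1), of "unit_vec n i" "unit_vec n j"] assms
  by (simp add: sform_unit_vec)

section \<open>Blocks of 4 \<times> 4 matrices\<close>

lemma sum_lessThan_2: "(\<Sum>i<(2::nat). f i) = f 0 + (f 1 :: 'a::comm_monoid_add)"
  by (simp add: eval_nat_numeral)

lemma sum_lessThan_4: "(\<Sum>i<(4::nat). f i) = f 0 + f 1 + f 2 + (f 3 :: 'a::comm_monoid_add)"
  by (simp add: eval_nat_numeral ac_simps)

text \<open>The (k, l) block of a matrix on \<complex>^n \<otimes> \<complex>^2, in the index convention (a, b) \<mapsto> 2a + b of ampl.\<close>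

definition block2 :: "'a mat \<Rightarrow> nat \<Rightarrow> nat \<Rightarrow> 'a mat" where
  "block2 X k l = mat 2 2 (\<lambda>(b, b'). X $$ (2 * k + b, 2 * l + b'))"

definition block_embed :: "nat \<Rightarrow> complex vec \<Rightarrow> complex vec" where
  "block_embed k v = vec 4 (\<lambda>i. if i div 2 = k then v $ (i mod 2) else 0)"

lemma block_embed_carrier: "block_embed k v \<in> carrier_vec 4"
  by (simp add: block_embed_def)

lemma sform_block_embed:
  assumes "k < 2" "l < 2" "u \<in> carrier_vec 2" "v \<in> carrier_vec 2"
  shows "sform X (block_embed k u) (block_embed l v) = sform (block2 X k l) u v"
proof -
  have "k \<in> {0, 1}" "l \<in> {0, 1}"
    using assms by auto
  thus ?thesis
    using assms by (auto simp: sform_def block_embed_def block2_def sum_lessThan_2 sum_lessThan_4)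
qed

lemma psd_block2:
  assumes "psd 4 X" "k < 2"
  shows "psd 2 (block2 X k k)"
  unfolding psd_def
proof (intro conjI ballI)
  fix v :: "complex vec"
  assume "v \<in> carrier_vec 2"
  hence "qform (block2 X k k) v = qform X (block_embed k v)"
    using assms by (simp add: qform_eq_sform sform_block_embed)
  thus "Im (qform (block2 X k k) v) = 0" "0 \<le> Re (qform (block2 X k k) v)"
    using assms(1) block_embed_carrier by (auto simp: psd_def)
qed (simp add: block2_def)

lemma psd_block2_Cauchy_Schwarz:
  assumes "psd 4 X" "k < 2" "l < 2" "u \<in> carrier_vec 2" "v \<in> carrier_vec 2"
  shows "(cmod (sform (block2 X k l) u v))\<^sup>2 \<le> Re (qform (block2 X k k) u) * Re (qform (block2 X l l) v)"
  using psd_Cauchy_Schwarz[OF assms(1) block_embed_carrier block_embed_carrier, of k u l v] assms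
  by (simp add: qform_eq_sform sform_block_embed)

lemma psd_ketbra: "psd (dim_vec w) (ketbra w)"
  unfolding psd_def
proof (intro conjI ballI)
  fix v :: "complex vec"
  assume "v \<in> carrier_vec (dim_vec w)"
  hence "dim_vec v = dim_vec w"
    by simp
  define S where "S = (\<Sum>j<dim_vec w. cnj (w $ j) * v $ j)"
  have "qform (ketbra w) v = (\<Sum>i<dim_vec w. \<Sum>j<dim_vec w. cnj (v $ i) * w $ i * (cnj (w $ j) * v $ j))"
    unfolding qform_def ketbra_def \<open>dim_vec v = dim_vec w\<close> by (intro sum.cong refl) (simp add: mult.assoc)
  also have "\<dots> = (\<Sum>i<dim_vec w. cnj (v $ i) * w $ i) * S"
    by (simp add: S_def sum_product)
  also have "(\<Sum>i<dim_vec w. cnj (v $ i) * w $ i) = cnj S"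
    by (simp add: S_def cnj_sum mult.commute)
  also have "cnj S * S = of_real ((cmod S)\<^sup>2)"
    using complex_norm_square[of S] by (simp only: mult.commute)
  finally show "Im (qform (ketbra w) v) = 0" "0 \<le> Re (qform (ketbra w) v)"
    by simp_all
qed (simp add: ketbra_def)

lemma block2_ampl:
  assumes "k < n" "l < n" "\<Psi> (block2 X k l) \<in> carrier_mat 2 2"
  shows "block2 (ampl n \<Psi> X) k l = \<Psi> (block2 X k l)"
proof (rule eq_matI)
  fix b b' assume "b < dim_row (\<Psi> (block2 X k l))" "b' < dim_col (\<Psi> (block2 X k l))"
  hence "b < 2" "b' < 2"
    using assms(3) by auto
  moreover have "2 * k + b < 2 * n" "2 * l + b' < 2 * n"
    using assms(1,2) \<open>b < 2\<close> \<open>b' < 2\<close> by linarith+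
  ultimately show "block2 (ampl n \<Psi> X) k l $$ (b, b') = \<Psi> (block2 X k l) $$ (b, b')"
    by (simp add: block2_def ampl_def)
qed (use assms(3) in \<open>simp_all add: block2_def\<close>)

lemma block2_ketbra_append:
  assumes "\<psi> \<in> carrier_vec 2" "\<phi> \<in> carrier_vec 2"
  shows "block2 (ketbra (\<psi> @\<^sub>v \<phi>)) 0 0 = ketbra \<psi>"
    and "block2 (ketbra (\<psi> @\<^sub>v \<phi>)) 1 1 = ketbra \<phi>"
    and "trace2 (block2 (ketbra (\<psi> @\<^sub>v \<phi>)) 0 1) = cnj (braket \<psi> \<phi>)"
  using assms
  by (auto simp: block2_def ketbra_def trace2_def braket_def sum_lessThan_2)

section \<open>Bloch vectors\<close>

text \<open>The coordinates are tr (\<rho> \<sigma>x), tr (\<rho> \<sigma>y), tr (\<rho> \<sigma>z) for Hermitian \<rho>.\<close>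

definition bloch :: "complex mat \<Rightarrow> real \<times> real \<times> real" where
  "bloch \<rho> = (2 * Re (\<rho> $$ (0, 1)), - 2 * Im (\<rho> $$ (0, 1)), Re (\<rho> $$ (0, 0)) - Re (\<rho> $$ (1, 1)))"

lemma braket_dim2: "v \<in> carrier_vec 2 \<Longrightarrow> braket u v = cnj (u $ 0) * v $ 0 + cnj (u $ 1) * v $ 1"
  by (simp add: braket_def sum_lessThan_2)

lemma unit_vec2_iff:
  "unit_vec2 v \<longleftrightarrow> v \<in> carrier_vec 2 \<and> (cmod (v $ 0))\<^sup>2 + (cmod (v $ 1))\<^sup>2 = 1"
proof -
  have "cnj (v $ 0) * v $ 0 + cnj (v $ 1) * v $ 1 = of_real ((cmod (v $ 0))\<^sup>2 + (cmod (v $ 1))\<^sup>2)"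
    by (simp only: of_real_add complex_norm_square mult.commute)
  thus ?thesis
    unfolding unit_vec2_def by (auto simp: braket_dim2 simp del: of_real_add)
qed

lemma bloch_ketbra:
  assumes "v \<in> carrier_vec 2"
  shows "bloch (ketbra v) = (2 * Re (cnj (v $ 0) * v $ 1), 2 * Im (cnj (v $ 0) * v $ 1),
                              (cmod (v $ 0))\<^sup>2 - (cmod (v $ 1))\<^sup>2)"
  using assms unfolding cmod_power2 by (simp add: bloch_def ketbra_def power2_eq_square)

lemma inner_bloch_ketbra:
  assumes "unit_vec2 u" "unit_vec2 v"
  shows "inner (bloch (ketbra u)) (bloch (ketbra v)) = 2 * (cmod (braket u v))\<^sup>2 - 1"
proof -
  have u: "u \<in> carrier_vec 2" "(Re (u $ 0))\<^sup>2 + (Im (u $ 0))\<^sup>2 + ((Re (u $ 1))\<^sup>2 + (Im (u $ 1))\<^sup>2) = 1"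
    and v: "v \<in> carrier_vec 2" "(Re (v $ 0))\<^sup>2 + (Im (v $ 0))\<^sup>2 + ((Re (v $ 1))\<^sup>2 + (Im (v $ 1))\<^sup>2) = 1"
    using assms by (simp_all add: unit_vec2_iff cmod_power2)
  have "inner (bloch (ketbra u)) (bloch (ketbra v))
      = 2 * (cmod (braket u v))\<^sup>2
        - ((Re (u $ 0))\<^sup>2 + (Im (u $ 0))\<^sup>2 + ((Re (u $ 1))\<^sup>2 + (Im (u $ 1))\<^sup>2))
          * ((Re (v $ 0))\<^sup>2 + (Im (v $ 0))\<^sup>2 + ((Re (v $ 1))\<^sup>2 + (Im (v $ 1))\<^sup>2))"
    unfolding bloch_ketbra[OF u(1)] bloch_ketbra[OF v(1)] inner_Pair inner_real_def braket_dim2[OF v(1)]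
      cmod_power2
    by (simp add: power2_eq_square algebra_simps)
  thus ?thesis
    using u(2) v(2) by simp
qed

lemma norm_bloch_ketbra:
  assumes "unit_vec2 v"
  shows "norm (bloch (ketbra v)) = 1"
  using inner_bloch_ketbra[OF assms assms] assms by (simp add: norm_eq_1 unit_vec2_def)

lemma bloch_ketbra_surj:
  assumes "norm m = 1"
  obtains v where "unit_vec2 v" "bloch (ketbra v) = m"
proof -
  obtain m1 m2 m3 where m: "m = (m1, m2, m3)"
    by (cases m) auto
  have sphere: "m1\<^sup>2 + m2\<^sup>2 + m3\<^sup>2 = 1"
    using assms by (simp add: m norm_Pair)
  show ?thesis
  proof (cases "m3 = -1")
    case True
    hence "m1 = 0" "m2 = 0"
      using sphere by simp_all
    thus ?thesis
      using True by (intro that[of "vec 2 (\<lambda>i. if i = 0 then 0 else 1)"])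
        (simp_all add: unit_vec2_iff bloch_ketbra m)
  next
    case False
    have "m3\<^sup>2 \<le> 1"
      using sphere by (smt (verit) zero_le_power2)
    hence "-1 < m3"
      using False by (simp add: abs_square_le_1 abs_le_iff)
    \<comment> \<open>the standard parametrisation of the Bloch sphere, with a real first coordinate\<close>
    define c where "c = sqrt ((1 + m3) / 2)"
    define b where "b = Complex (m1 / (2 * c)) (m2 / (2 * c))"
    have "0 < c" and c2: "c\<^sup>2 = (1 + m3) / 2"
      using \<open>-1 < m3\<close> by (simp_all add: c_def)
    have cb: "cnj (of_real c) * b = Complex (m1 / 2) (m2 / 2)"
      using \<open>0 < c\<close> by (simp add: b_def complex_eq_iff)
    have "(cmod b)\<^sup>2 = (m1\<^sup>2 + m2\<^sup>2) / (4 * c\<^sup>2)"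
      by (simp add: b_def cmod_power2 power_divide power_mult_distrib add_divide_distrib)
    also have "\<dots> = (1 - m3\<^sup>2) / (2 * (1 + m3))"
    proof -
      have "m1\<^sup>2 + m2\<^sup>2 = 1 - m3\<^sup>2" "4 * c\<^sup>2 = 2 * (1 + m3)"
        using sphere c2 by simp_all
      thus ?thesis
        by (simp only:)
    qed
    also have "\<dots> = (1 - m3) / 2"
      using \<open>-1 < m3\<close> by (simp add: field_simps power2_eq_square)
    finally have b2: "(cmod b)\<^sup>2 = (1 - m3) / 2" .
    show ?thesis
    proof (rule that[of "vec 2 (\<lambda>i. if i = 0 then of_real c else b)"])
      show "unit_vec2 (vec 2 (\<lambda>i. if i = 0 then of_real c else b))"
        using c2 b2 by (simp add: unit_vec2_iff add_divide_distrib[symmetric])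
      show "bloch (ketbra (vec 2 (\<lambda>i. if i = 0 then of_real c else b))) = m"
        using c2 b2 cb by (simp add: bloch_ketbra m diff_divide_distrib[symmetric])
    qed
  qed
qed

lemma Re_trace2_eq_1:
  assumes "trace2 \<rho> = 1"
  shows "Re (\<rho> $$ (0, 0)) + Re (\<rho> $$ (1, 1)) = 1"
  using arg_cong[OF assms, of Re] by (simp add: trace2_def)

lemma qform_bloch:
  assumes "psd 2 \<rho>" "trace2 \<rho> = 1" "unit_vec2 v"
  shows "Re (qform \<rho> v) = (1 + inner (bloch (ketbra v)) (bloch \<rho>)) / 2"
proof -
  define p q x y where "p = (cmod (v $ 0))\<^sup>2" and "q = (cmod (v $ 1))\<^sup>2"
    and "x = Re (\<rho> $$ (0, 0))" and "y = Re (\<rho> $$ (1, 1))"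
  have v: "v \<in> carrier_vec 2" "p + q = 1"
    using assms(3) by (simp_all add: unit_vec2_iff p_def q_def)
  have "x + y = 1"
    using Re_trace2_eq_1[OF assms(2)] by (simp add: x_def y_def)
  have "\<rho> $$ (1, 0) = cnj (\<rho> $$ (0, 1))"
    using psd_hermitian[OF assms(1), of 0 1] by simp
  hence "Re (qform \<rho> v) = p * x + q * y + 2 * Re (cnj (v $ 0) * v $ 1 * \<rho> $$ (0, 1))"
    using v(1) unfolding p_def q_def x_def y_def cmod_power2
    by (simp add: qform_def sum_lessThan_2 power2_eq_square algebra_simps)
  also have "p * x + q * y = (1 + (p - q) * (x - y)) / 2"
  proof -
    have q: "q = 1 - p" and y: "y = 1 - x"
      using v(2) \<open>x + y = 1\<close> by linarith+
    have "2 * (p * x + q * y) = 1 + (p - q) * (x - y)"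
      unfolding q y by (simp add: algebra_simps)
    thus ?thesis
      by simp
  qed
  finally show ?thesis
    unfolding bloch_ketbra[OF v(1)] by (simp add: bloch_def p_def q_def x_def y_def field_simps)
qed

lemma norm_bloch_le_1:
  assumes "psd 2 \<rho>" "trace2 \<rho> = 1"
  shows "norm (bloch \<rho>) \<le> 1"
proof -
  define x y where "x = Re (\<rho> $$ (0, 0))" and "y = Re (\<rho> $$ (1, 1))"
  have "(cmod (\<rho> $$ (0, 1)))\<^sup>2 \<le> x * y"
    using psd_Cauchy_Schwarz[OF assms(1), of "unit_vec 2 0" "unit_vec 2 1"]
    by (simp add: qform_eq_sform sform_unit_vec x_def y_def)
  hence "(norm (bloch \<rho>))\<^sup>2 \<le> 4 * (x * y) + (x - y)\<^sup>2"
    by (simp add: bloch_def norm_Pair cmod_power2 power_mult_distrib x_def y_def)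
  also have "\<dots> = (x + y)\<^sup>2"
    by (simp add: power2_eq_square algebra_simps)
  also have "\<dots> = 1"
    using Re_trace2_eq_1[OF assms(2)] by (simp add: x_def y_def)
  finally show ?thesis
    by (simp add: power_le_one_iff abs_square_le_1)
qed

section \<open>Positive matrices with unit-trace diagonal blocks\<close>

definition perp2 :: "complex vec \<Rightarrow> complex vec" where
  "perp2 v = vec 2 (\<lambda>i. if i = 0 then - cnj (v $ 1) else cnj (v $ 0))"

lemma unit_vec2_perp2: "unit_vec2 v \<Longrightarrow> unit_vec2 (perp2 v)"
  by (simp add: unit_vec2_iff perp2_def add.commute)

lemma sform_add_sform_perp2:
  assumes "unit_vec2 v"
  shows "sform A v v + sform A (perp2 v) (perp2 v) = trace2 A"
proof -
  have v: "v \<in> carrier_vec 2" "cnj (v $ 0) * v $ 0 + cnj (v $ 1) * v $ 1 = 1"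
    using assms braket_dim2[of v v] by (simp_all add: unit_vec2_def)
  have "sform A v v + sform A (perp2 v) (perp2 v)
      = (cnj (v $ 0) * v $ 0 + cnj (v $ 1) * v $ 1) * trace2 A"
    using v(1) by (simp add: sform_def perp2_def trace2_def sum_lessThan_2 algebra_simps)
  thus ?thesis
    using v(2) by simp
qed

lemma block_qform_diff_sq_le:
  assumes "psd 4 H" "trace2 (block2 H 0 0) = 1" "trace2 (block2 H 1 1) = 1" "unit_vec2 g"
  shows "(Re (qform (block2 H 0 0) g) - Re (qform (block2 H 1 1) g))\<^sup>2
         \<le> 1 - (cmod (trace2 (block2 H 0 1)))\<^sup>2"
proof -
  define g' where "g' = perp2 g"
  have carrier: "g \<in> carrier_vec 2" "g' \<in> carrier_vec 2"
    using assms(4) unit_vec2_perp2[OF assms(4)] by (simp_all add: unit_vec2_iff g'_def)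
  define A A' B B' where "A = Re (qform (block2 H 0 0) g)" and "A' = Re (qform (block2 H 0 0) g')"
    and "B = Re (qform (block2 H 1 1) g)" and "B' = Re (qform (block2 H 1 1) g')"
  have "A' = 1 - A" "B' = 1 - B"
    using assms(2,3) arg_cong[OF sform_add_sform_perp2[OF assms(4), of "block2 H 0 0"], of Re]
      arg_cong[OF sform_add_sform_perp2[OF assms(4), of "block2 H 1 1"], of Re]
    by (simp_all add: A_def A'_def B_def B'_def g'_def qform_eq_sform)
  have "0 \<le> A" "0 \<le> A'" "0 \<le> B" "0 \<le> B'"
    using psd_qform_real(2)[OF psd_block2[OF assms(1)]] carrier
    by (simp_all add: A_def A'_def B_def B'_def)
  have CS: "cmod (sform (block2 H 0 1) v v) \<le> sqrt (Re (qform (block2 H 0 0) v) * Re (qform (block2 H 1 1) v))"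
    if "v \<in> carrier_vec 2" for v
    using psd_block2_Cauchy_Schwarz[OF assms(1), of 0 1 v v] that by (simp add: real_le_rsqrt)
  \<comment> \<open>expand the trace of the off-diagonal block in the orthonormal basis g, g'\<close>
  have "cmod (trace2 (block2 H 0 1))
      \<le> cmod (sform (block2 H 0 1) g g) + cmod (sform (block2 H 0 1) g' g')"
    unfolding sform_add_sform_perp2[OF assms(4), symmetric] g'_def by (rule norm_triangle_ineq)
  also have "\<dots> \<le> sqrt (A * B) + sqrt ((1 - A) * (1 - B))"
    using CS[OF carrier(1), folded A_def B_def] CS[OF carrier(2), folded A'_def B'_def]
    unfolding \<open>A' = 1 - A\<close> \<open>B' = 1 - B\<close> by simp
  finally have fidelity: "cmod (trace2 (block2 H 0 1)) \<le> sqrt (A * B) + sqrt ((1 - A) * (1 - B))" .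
  have "(A - B)\<^sup>2 \<le> 1 - (cmod (trace2 (block2 H 0 1)))\<^sup>2"
    by (rule binary_fidelity_bound)
      (use fidelity \<open>A' = 1 - A\<close> \<open>B' = 1 - B\<close> \<open>0 \<le> A\<close> \<open>0 \<le> A'\<close> \<open>0 \<le> B\<close> \<open>0 \<le> B'\<close> in auto)
  thus ?thesis
    by (simp add: A_def B_def)
qed

lemma cmod_trace_block2_le_1:
  assumes "psd 4 H" "trace2 (block2 H 0 0) = 1" "trace2 (block2 H 1 1) = 1"
  shows "cmod (trace2 (block2 H 0 1)) \<le> 1"
proof -
  have "unit_vec2 (unit_vec 2 0)"
    by (simp add: unit_vec2_iff)
  from block_qform_diff_sq_le[OF assms this]
  have "(cmod (trace2 (block2 H 0 1)))\<^sup>2 \<le> 1"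
    by (smt (verit) zero_le_power2)
  thus ?thesis
    by (simp add: abs_square_le_1)
qed

lemma norm_bloch_block2_diff_le:
  assumes "psd 4 H" "trace2 (block2 H 0 0) = 1" "trace2 (block2 H 1 1) = 1"
  shows "norm (bloch (block2 H 0 0) - bloch (block2 H 1 1)) \<le> 2 * sqrt (1 - (cmod (trace2 (block2 H 0 1)))\<^sup>2)"
proof (cases "bloch (block2 H 0 0) = bloch (block2 H 1 1)")
  case True
  thus ?thesis
    using cmod_trace_block2_le_1[OF assms] by (simp add: abs_square_le_1)
next
  case False
  define d where "d = bloch (block2 H 0 0) - bloch (block2 H 1 1)"
  have "norm d \<noteq> 0"
    using False by (simp add: d_def)
  \<comment> \<open>test the two output states on the pure state whose Bloch vector points along d\<close>
  obtain g where g: "unit_vec2 g" "bloch (ketbra g) = (1 / norm d) *\<^sub>R d"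
    using bloch_ketbra_surj[of "(1 / norm d) *\<^sub>R d"] \<open>norm d \<noteq> 0\<close> by auto
  define m where "m = bloch (ketbra g)"
  have q: "Re (qform (block2 H k k) g) = (1 + inner m (bloch (block2 H k k))) / 2" if "k < 2" for k
    using qform_bloch[OF psd_block2[OF assms(1) that] _ g(1)] assms(2,3) that
    by (auto simp: m_def less_2_cases_iff)
  have "Re (qform (block2 H 0 0) g) - Re (qform (block2 H 1 1) g) = inner m d / 2"
    using q[of 0] q[of 1] by (simp add: d_def inner_diff_right diff_divide_distrib)
  also have "\<dots> = norm d / 2"
    using \<open>norm d \<noteq> 0\<close> g(2) by (simp add: m_def power2_norm_eq_inner[symmetric] power2_eq_square)
  finally have "norm d / 2 \<le> sqrt (1 - (cmod (trace2 (block2 H 0 1)))\<^sup>2)"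
    using block_qform_diff_sq_le[OF assms g(1)] by (metis real_le_rsqrt)
  thus ?thesis
    by (simp add: d_def)
qed

lemma norm_bloch_ketbra_add:
  assumes "unit_vec2 e" "unit_vec2 f"
  shows "norm (bloch (ketbra e) + bloch (ketbra f)) = 2 * cmod (braket e f)"
proof -
  have "(norm (bloch (ketbra e) + bloch (ketbra f)))\<^sup>2 = (2 * cmod (braket e f))\<^sup>2"
    using norm_add_diff_unit(1)[OF norm_bloch_ketbra[OF assms(1)] norm_bloch_ketbra[OF assms(2)]]
    by (simp add: inner_bloch_ketbra[OF assms] power_mult_distrib)
  thus ?thesis
    by (rule power2_eq_imp_eq) simp_all
qed

lemma norm_bloch_ketbra_diff:
  assumes "unit_vec2 e" "unit_vec2 f"
  shows "norm (bloch (ketbra e) - bloch (ketbra f)) = 2 * sqrt (1 - (cmod (braket e f))\<^sup>2)"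
    and "cmod (braket e f) \<le> 1"
proof -
  have sq: "(norm (bloch (ketbra e) - bloch (ketbra f)))\<^sup>2 = 4 * (1 - (cmod (braket e f))\<^sup>2)"
    using norm_add_diff_unit(2)[OF norm_bloch_ketbra[OF assms(1)] norm_bloch_ketbra[OF assms(2)]]
    by (simp add: inner_bloch_ketbra[OF assms])
  thus "norm (bloch (ketbra e) - bloch (ketbra f)) = 2 * sqrt (1 - (cmod (braket e f))\<^sup>2)"
    by (metis norm_ge_zero real_sqrt_abs real_sqrt_mult real_sqrt_four abs_of_nonneg)
  have "0 \<le> 4 * (1 - (cmod (braket e f))\<^sup>2)"
    unfolding sq[symmetric] by simp
  hence "(cmod (braket e f))\<^sup>2 \<le> 1"
    by simp
  thus "cmod (braket e f) \<le> 1"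
    by (simp add: abs_square_le_1)
qed

lemma block2_objective_le:
  assumes "psd 4 H" "trace2 (block2 H 0 0) = 1" "trace2 (block2 H 1 1) = 1"
    and "unit_vec2 e" "unit_vec2 f"
  shows "Re (1/2 * qform (block2 H 0 0) e + 1/2 * qform (block2 H 1 1) f)
         \<le> 1/2 * (1 + sqrt ((cmod (braket e f))\<^sup>2 +
              (cmod (trace2 (block2 H 0 1)) * cmod (braket e f) +
               sqrt ((1 - (cmod (trace2 (block2 H 0 1)))\<^sup>2) * (1 - (cmod (braket e f))\<^sup>2)))\<^sup>2))"
proof -
  define r1 where "r1 = bloch (block2 H 0 0)"
  define r2 where "r2 = bloch (block2 H 1 1)"
  define a where "a = bloch (ketbra e)"
  define b where "b = bloch (ketbra f)"
  define \<beta> where "\<beta> = cmod (braket e f)"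
  define k where "k = cmod (trace2 (block2 H 0 1))"
  define X where "X = norm (r1 + r2) / 2"
  define Y where "Y = norm (r1 - r2) / 2"
  have psd: "psd 2 (block2 H 0 0)" "psd 2 (block2 H 1 1)"
    using psd_block2[OF assms(1)] by simp_all
  have "X\<^sup>2 + Y\<^sup>2 = ((norm r1)\<^sup>2 + (norm r2)\<^sup>2) / 2"
    using parallelogram_law[of r1 r2] by (simp add: X_def Y_def power_divide)
  also have "\<dots> \<le> 1"
    using power_le_one[OF norm_ge_zero norm_bloch_le_1[OF psd(1) assms(2)], of 2]
      power_le_one[OF norm_ge_zero norm_bloch_le_1[OF psd(2) assms(3)], of 2]
    by (simp add: r1_def r2_def)
  finally have disc: "X\<^sup>2 + Y\<^sup>2 \<le> 1" .
  have cut: "Y \<le> sqrt (1 - k\<^sup>2)"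
    using norm_bloch_block2_diff_le[OF assms(1-3)] by (simp add: Y_def r1_def r2_def k_def)
  have "Re (1/2 * qform (block2 H 0 0) e + 1/2 * qform (block2 H 1 1) f)
      = 1/2 + (inner a r1 + inner b r2) / 4"
    using qform_bloch[OF psd(1) assms(2,4)] qform_bloch[OF psd(2) assms(3,5)]
    by (simp add: a_def b_def r1_def r2_def field_simps)
  also have "\<dots> \<le> 1/2 + (norm (a + b) * norm (r1 + r2) + norm (a - b) * norm (r1 - r2)) / 8"
    using inner_add_inner_le[of a r1 b r2] by simp
  also have "\<dots> = 1/2 + (\<beta> * X + sqrt (1 - \<beta>\<^sup>2) * Y) / 2"
    using norm_bloch_ketbra_add[OF assms(4,5)] norm_bloch_ketbra_diff(1)[OF assms(4,5)]
    by (simp add: a_def b_def \<beta>_def X_def Y_def field_simps)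
  also have "\<beta> * X + sqrt (1 - \<beta>\<^sup>2) * Y \<le> sqrt (\<beta>\<^sup>2 + (k * \<beta> + sqrt ((1 - k\<^sup>2) * (1 - \<beta>\<^sup>2)))\<^sup>2)"
    using cmod_trace_block2_le_1[OF assms(1-3)] norm_bloch_ketbra_diff(2)[OF assms(4,5)] disc cut
    by (intro linear_le_on_cut_disc) (simp_all add: k_def \<beta>_def X_def Y_def)
  finally show ?thesis
    by (simp add: \<beta>_def k_def)
qed

lemma trace2_ketbra: "v \<in> carrier_vec 2 \<Longrightarrow> trace2 (ketbra v) = braket v v"
  by (simp add: trace2_def ketbra_def braket_dim2 mult.commute)

lemma channel_objective_le:
  assumes "\<Psi> \<in> channels2" "unit_vec2 \<psi>" "unit_vec2 \<phi>" "unit_vec2 e" "unit_vec2 f"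
  shows "Re (1/2 * expval e (\<Psi> (ketbra \<psi>)) + 1/2 * expval f (\<Psi> (ketbra \<phi>)))
         \<le> 1/2 * (1 + sqrt ((cmod (braket e f))\<^sup>2 +
              (cmod (braket \<psi> \<phi>) * cmod (braket e f) +
               sqrt ((1 - (cmod (braket \<psi> \<phi>))\<^sup>2) * (1 - (cmod (braket e f))\<^sup>2)))\<^sup>2))"
proof -
  have carrier: "\<psi> \<in> carrier_vec 2" "\<phi> \<in> carrier_vec 2"
    using assms(2,3) by (simp_all add: unit_vec2_def)
  have lin: "\<And>A. A \<in> carrier_mat 2 2 \<Longrightarrow> \<Psi> A \<in> carrier_mat 2 2"
    and CP: "completely_positive2 \<Psi>" and TP: "\<And>A. A \<in> carrier_mat 2 2 \<Longrightarrow> trace2 (\<Psi> A) = trace2 A"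
    using assms(1) by (auto simp: channels2_def quantum_channel2_def linear_map2_def trace_preserving2_def)
  define X where "X = ketbra (\<psi> @\<^sub>v \<phi>)"
  define H where "H = ampl 2 \<Psi> X"
  have "psd (2 * 2) X"
    using psd_ketbra[of "\<psi> @\<^sub>v \<phi>"] carrier by (simp add: X_def)
  hence "psd (2 * 2) H"
    using CP unfolding completely_positive2_def H_def by blast
  hence "psd 4 H"
    by simp
  have blocks: "block2 H k l = \<Psi> (block2 X k l)" if "k < 2" "l < 2" for k l
    unfolding H_def using that lin by (intro block2_ampl) (simp_all add: block2_def)
  have H00: "block2 H 0 0 = \<Psi> (ketbra \<psi>)" and H11: "block2 H 1 1 = \<Psi> (ketbra \<phi>)"
    using blocks[of 0 0] blocks[of 1 1] block2_ketbra_append[OF carrier] by (simp_all add: X_def)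
  have tr01: "trace2 (block2 H 0 1) = cnj (braket \<psi> \<phi>)"
    using blocks[of 0 1] TP[of "block2 X 0 1"] block2_ketbra_append(3)[OF carrier]
    by (simp add: X_def block2_def)
  have tr00: "trace2 (block2 H 0 0) = 1" and tr11: "trace2 (block2 H 1 1) = 1"
    using assms(2,3) carrier unfolding H00 H11
    by (simp_all add: TP ketbra_def trace2_ketbra[symmetric] unit_vec2_def)
  show ?thesis
    using block2_objective_le[OF \<open>psd 4 H\<close> tr00 tr11 assms(4,5)]
    unfolding H00 H11 tr01 expval_def by simp
qed

lemma id_in_channels2: "(\<lambda>A. A) \<in> channels2"
proof -
  have "ampl n (\<lambda>A. A) X = X" if "X \<in> carrier_mat (2 * n) (2 * n)" for n X
    using that by (intro eq_matI) (auto simp: ampl_def)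
  thus ?thesis
    by (auto simp: channels2_def quantum_channel2_def linear_map2_def completely_positive2_def
        trace_preserving2_def psd_def)
qed

theorem corollary5:
  fixes \<psi> \<phi> e f :: "complex vec"
  assumes "unit_vec2 \<psi>" and "unit_vec2 \<phi>" and "unit_vec2 e" and "unit_vec2 f"
  shows "(SUP \<Psi>\<in>channels2.
            Re (1/2 * expval e (\<Psi> (ketbra \<psi>)) + 1/2 * expval f (\<Psi> (ketbra \<phi>))))
         \<le> 1/2 * (1 + sqrt ((cmod (braket e f))\<^sup>2 +
              (cmod (braket \<psi> \<phi>) * cmod (braket e f) +
               sqrt ((1 - (cmod (braket \<psi> \<phi>))\<^sup>2) * (1 - (cmod (braket e f))\<^sup>2)))\<^sup>2))"
  \<comment> \<open>nonemptiness of channels2 matters: the supremum of the empty set of reals is unspecified\<close>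
  using id_in_channels2 channel_objective_le[OF _ assms]
  by (intro cSUP_least) auto

end
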